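(* Let $M$ be a simple $L$-module such that (i) for some $m\ge 1$, either $d^m$ or $u^m$ acts on $M$ as a scalar, and (ii) $M$ contains a weight vector. Then $M$ is finite-dimensional.
   Context: Let $r,s,\gamma\in\mathbb C$ with $rs\neq 0$ and $\phi\in\mathbb C[x]$. The generalized down-up algebra $L=L(\phi,r,s,\gamma)$ is the associative $\mathbb C$-algebra generated by $u,d,h$ subject to $hu-ruh=\gamma u$, $dh-rhd=\gamma d$, $du-sud=\phi(h)$. Modules are left modules. A weight vector of an $L$-module $M$ is a nonzero $v\in M$ with $hv=\lambda v$ and $(ud)v=\beta v$ for some $(\lambda,\beta)\in\mathbb C^2$. *)

theory Defs
  imports "HOL-Computational_Algebra.Polynomial"
begin

text \<open>An L-module for the generalized down-up algebra L(phi,r,s,gamma) is a complex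
vector space V (given by a scalar multiplication scale on an additive group) with
three linear operators U, D, H (the actions of u, d, h) satisfying the defining
relations of L.\<close>

definition poly_op ::
  "(complex \<Rightarrow> 'v::ab_group_add \<Rightarrow> 'v) \<Rightarrow> complex poly \<Rightarrow> ('v \<Rightarrow> 'v) \<Rightarrow> 'v \<Rightarrow> 'v" where
  "poly_op scale p H v = (\<Sum>i\<le>degree p. scale (coeff p i) ((H ^^ i) v))"

definition gdu_module ::
  "complex poly \<Rightarrow> complex \<Rightarrow> complex \<Rightarrow> complex \<Rightarrow>
   (complex \<Rightarrow> 'v::ab_group_add \<Rightarrow> 'v) \<Rightarrow> ('v \<Rightarrow> 'v) \<Rightarrow> ('v \<Rightarrow> 'v) \<Rightarrow> ('v \<Rightarrow> 'v) \<Rightarrow> bool" where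
  "gdu_module phi r s \<gamma> scale U D H \<longleftrightarrow>
     vector_space scale \<and>
     Vector_Spaces.linear scale scale U \<and>
     Vector_Spaces.linear scale scale D \<and>
     Vector_Spaces.linear scale scale H \<and>
     (\<forall>v. H (U v) - scale r (U (H v)) = scale \<gamma> (U v)) \<and>
     (\<forall>v. D (H v) - scale r (H (D v)) = scale \<gamma> (D v)) \<and>
     (\<forall>v. D (U v) - scale s (U (D v)) = poly_op scale phi H v)"

text \<open>Submodules are exactly the subspaces stable under the generators u, d, h.
A module is simple if it is nonzero and has no submodules besides 0 and itself.\<close>

definition gdu_simple ::
  "(complex \<Rightarrow> 'v::ab_group_add \<Rightarrow> 'v) \<Rightarrow> ('v \<Rightarrow> 'v) \<Rightarrow> ('v \<Rightarrow> 'v) \<Rightarrow> ('v \<Rightarrow> 'v) \<Rightarrow> bool" where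
  "gdu_simple scale U D H \<longleftrightarrow>
     (UNIV :: 'v set) \<noteq> {0} \<and>
     (\<forall>W. module.subspace scale W \<and> U ` W \<subseteq> W \<and> D ` W \<subseteq> W \<and> H ` W \<subseteq> W
          \<longrightarrow> W = {0} \<or> W = UNIV)"

definition weight_vector ::
  "(complex \<Rightarrow> 'v::ab_group_add \<Rightarrow> 'v) \<Rightarrow> ('v \<Rightarrow> 'v) \<Rightarrow> ('v \<Rightarrow> 'v) \<Rightarrow> ('v \<Rightarrow> 'v) \<Rightarrow> 'v \<Rightarrow> bool" where
  "weight_vector scale U D H v \<longleftrightarrow>
     v \<noteq> 0 \<and> (\<exists>lam \<beta>. H v = scale lam v \<and> U (D v) = scale \<beta> v)"

definition fin_dim :: "(complex \<Rightarrow> 'v::ab_group_add \<Rightarrow> 'v) \<Rightarrow> bool" where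
  "fin_dim scale \<longleftrightarrow> (\<exists>B. finite B \<and> module.span scale B = UNIV)"

end

theory Submission
  imports Defs
begin

(*
  Let v be a weight vector: H v = l v and U (D v) = b v.  The defining relations of L show
  that every U^i v and every D^j v is again an H-eigenvector on which UD acts by a scalar, and
  that D U^(i+1) v and U D^(j+1) v are multiples of U^i v and D^j v.  Hence the vectors U^i v,
  D^j v span a submodule, which by simplicity is the whole module.

  If D^m acts as a scalar c, there are two cases.  For c \<noteq> 0, D^m U^(m+n) v is a multiple of
  U^n v, so the finitely many U^i v, D^j v with i, j < m already span.  For c = 0 we pass to a
  lowest weight vector w (D w = 0): its U-orbit spans the module, and D^m U^m w = 0 forces
  D U^k w = 0 for some k \<ge> 1.  Either the orbit becomes linearly dependent, and then an initial
  segment of it spans, or it is independent, and then the span of the U^i w with i \<ge> k is a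
  nonzero submodule not containing w, contradicting simplicity.

  If instead U^m acts as a scalar, exchanging the roles of u and d turns the module into a
  module over another generalized down-up algebra, which reduces to the first case.
*)

context vector_space
begin

lemma hom_span_into:
  assumes F: "module_hom scale scale F" and S: "F ` S \<subseteq> span T" and x: "x \<in> span S"
  shows "F x \<in> span T"
proof -
  have "F x \<in> span (F ` S)" using module_hom.span_image[OF F] x by blast
  also have "span (F ` S) \<subseteq> span T" using S by (simp add: span_minimal)
  finally show ?thesis .
qed

(* A sequence none of whose terms lies in the span of the preceding ones is injective
   and linearly independent, so its first term is not in the span of any tail. *)
lemma triangular_head_not_in_tail_span:
  fixes f :: "nat \<Rightarrow> 'b"
  assumes new: "\<And>N. f N \<notin> span (f ` {..<N})" and k: "0 < k"
  shows "f 0 \<notin> span (f ` {k..})"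
proof
  have segments: "independent (f ` {..<K})" for K
  proof (induction K)
    case (Suc K)
    have "f ` {..<Suc K} = insert (f K) (f ` {..<K})" by (auto simp: lessThan_Suc)
    then show ?case using independent_insertI[OF new Suc.IH] by simp
  qed (simp add: dependent_def)
  have nested: "f ` {..<K} \<subseteq> f ` {..<K'} \<or> f ` {..<K'} \<subseteq> f ` {..<K}" for K K'
    using nat_le_linear[of K K'] by (auto intro: image_mono)
  have "independent (\<Union>K. f ` {..<K})"
    by (rule independent_Union_directed) (use nested segments in blast)+
  moreover have "(\<Union>K. f ` {..<K}) = range f" by blast
  ultimately have indep: "independent (range f)" by simp
  have "f j \<noteq> f 0" if "j \<ge> k" for j
    using new[of j] that k by (auto intro: span_base)
  then have "f ` {k..} \<subseteq> range f - {f 0}" by auto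
  moreover assume "f 0 \<in> span (f ` {k..})"
  ultimately have "f 0 \<in> span (range f - {f 0})" using span_mono by blast
  then show False using indep unfolding dependent_def by blast
qed

lemma orbit_dependent_finite_span:
  assumes F: "module_hom scale scale F"
    and spans: "span (range (\<lambda>i. (F ^^ i) w)) = UNIV"
    and dep: "(F ^^ N) w \<in> span ((\<lambda>i. (F ^^ i) w) ` {..<N})"
  shows "\<exists>B. finite B \<and> span B = UNIV"
proof -
  let ?B = "(\<lambda>i. (F ^^ i) w) ` {..<N}"
  have closed: "F ` ?B \<subseteq> span ?B"
  proof
    fix y assume "y \<in> F ` ?B"
    then obtain j where "j < N" "y = (F ^^ Suc j) w" by auto
    then show "y \<in> span ?B"
      using dep by (cases "Suc j = N")
        (auto intro!: span_base rev_image_eqI[of "Suc j"] simp del: funpow.simps)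
  qed
  have "(F ^^ i) w \<in> span ?B" for i
  proof (induction i)
    case 0
    show ?case using dep by (cases N) (auto intro!: span_base rev_image_eqI[of 0])
  next
    case (Suc i)
    show ?case using hom_span_into[OF F closed Suc.IH] by simp
  qed
  then have "span (range (\<lambda>i. (F ^^ i) w)) \<subseteq> span ?B"
    by (intro span_minimal) auto
  then show ?thesis using spans by (intro exI[of _ ?B]) auto
qed

end

(* The H-eigenvalues of U^n v and D^n v for an H-eigenvector v of eigenvalue l, and the
   eigenvalue of UD on U^n v when moreover UD v = b v. *)
primrec eig_up :: "complex \<Rightarrow> complex \<Rightarrow> complex \<Rightarrow> nat \<Rightarrow> complex" where
  "eig_up r g l 0 = l"
| "eig_up r g l (Suc n) = r * eig_up r g l n + g"

primrec eig_down :: "complex \<Rightarrow> complex \<Rightarrow> complex \<Rightarrow> nat \<Rightarrow> complex" where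
  "eig_down r g l 0 = l"
| "eig_down r g l (Suc n) = (eig_down r g l n - g) / r"

primrec ud_up ::
  "complex poly \<Rightarrow> complex \<Rightarrow> complex \<Rightarrow> complex \<Rightarrow> complex \<Rightarrow> complex \<Rightarrow> nat \<Rightarrow> complex" where
  "ud_up p r s g l b 0 = b"
| "ud_up p r s g l b (Suc n) = s * ud_up p r s g l b n + poly p (eig_up r g l n)"

locale du_module = vector_space scale
  for scale :: "complex \<Rightarrow> 'v::ab_group_add \<Rightarrow> 'v" (infixr "*s" 75) +
  fixes phi :: "complex poly" and r s g :: complex and U D H :: "'v \<Rightarrow> 'v"
  assumes hom_U: "module_hom scale scale U"
    and hom_D: "module_hom scale scale D"
    and hom_H: "module_hom scale scale H"
    and rel_HU: "H (U x) - r *s U (H x) = g *s U x"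
    and rel_DH: "D (H x) - r *s H (D x) = g *s D x"
    and rel_DU: "D (U x) - s *s U (D x) = poly_op scale phi H x"
    and r_nz: "r \<noteq> 0" and s_nz: "s \<noteq> 0"
begin

lemmas U_scale[simp] = module_hom.scale[OF hom_U]
lemmas D_scale[simp] = module_hom.scale[OF hom_D]
lemmas H_scale[simp] = module_hom.scale[OF hom_H]
lemmas U_zero[simp] = module_hom.zero[OF hom_U]
lemmas D_zero[simp] = module_hom.zero[OF hom_D]
lemmas U_add = module_hom.add[OF hom_U]
lemmas D_add = module_hom.add[OF hom_D]
lemmas H_add = module_hom.add[OF hom_H]

lemma funpow_D_scale: "(D ^^ k) (a *s x) = a *s (D ^^ k) x"
  by (induction k) simp_all

lemma poly_op_eigen:
  assumes "H x = \<mu> *s x"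
  shows "poly_op scale p H x = poly p \<mu> *s x"
proof -
  have "(H ^^ i) x = \<mu> ^ i *s x" for i
    by (induction i) (simp_all add: assms mult.commute)
  then show ?thesis unfolding poly_op_def poly_altdef scale_sum_left by simp
qed

lemma H_U_eigen:
  assumes "H x = \<mu> *s x"
  shows "H (U x) = (r * \<mu> + g) *s U x"
proof -
  have "H (U x) = r *s U (H x) + g *s U x" using rel_HU[of x] by (simp add: algebra_simps)
  then show ?thesis using assms by (simp add: scale_left_distrib)
qed

lemma H_D_eigen:
  assumes "H x = \<mu> *s x"
  shows "H (D x) = ((\<mu> - g) / r) *s D x"
proof -
  have "r *s H (D x) = (\<mu> - g) *s D x"
    using rel_DH[of x] assms by (simp add: algebra_simps scale_left_diff_distrib)
  then have "(1 / r) *s (r *s H (D x)) = (1 / r) *s ((\<mu> - g) *s D x)" by simp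
  then show ?thesis using r_nz by simp
qed

lemma DU_eigen:
  assumes "H x = \<mu> *s x" and "U (D x) = b *s x"
  shows "D (U x) = (s * b + poly phi \<mu>) *s x"
proof -
  have "D (U x) = s *s U (D x) + poly_op scale phi H x"
    using rel_DU[of x] by (simp add: algebra_simps)
  also have "\<dots> = (s * b + poly phi \<mu>) *s x"
    using assms(2) poly_op_eigen[OF assms(1)] by (simp add: scale_left_distrib)
  finally show ?thesis .
qed

lemma UD_eigen:
  assumes "H x = \<mu> *s x" and "D (U x) = b *s x"
  shows "U (D x) = ((b - poly phi \<mu>) / s) *s x"
proof -
  have "s *s U (D x) = D (U x) - poly_op scale phi H x"
    using rel_DU[of x] by (simp add: algebra_simps)
  also have "\<dots> = (b - poly phi \<mu>) *s x"
    using assms(2) poly_op_eigen[OF assms(1)] by (simp add: scale_left_diff_distrib)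
  finally have "s *s U (D x) = (b - poly phi \<mu>) *s x" .
  then have "(1 / s) *s (s *s U (D x)) = (1 / s) *s ((b - poly phi \<mu>) *s x)" by simp
  then show ?thesis using s_nz by simp
qed

lemma H_U_pow_eigen: "H v = l *s v \<Longrightarrow> H ((U ^^ i) v) = eig_up r g l i *s (U ^^ i) v"
  by (induction i) (auto intro: H_U_eigen)

lemma H_D_pow_eigen: "H v = l *s v \<Longrightarrow> H ((D ^^ i) v) = eig_down r g l i *s (D ^^ i) v"
  by (induction i) (auto intro: H_D_eigen)

lemma UD_U_pow:
  assumes "H v = l *s v" and "U (D v) = b *s v"
  shows "U (D ((U ^^ i) v)) = ud_up phi r s g l b i *s (U ^^ i) v"
proof (induction i)
  case (Suc i)
  have "D (U ((U ^^ i) v)) = ud_up phi r s g l b (Suc i) *s (U ^^ i) v"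
    using DU_eigen[OF H_U_pow_eigen[OF assms(1)] Suc.IH] by simp
  then show ?case by simp
qed (use assms in simp)

lemma D_U_pow:
  assumes "H v = l *s v" and "U (D v) = b *s v"
  shows "D ((U ^^ Suc i) v) = ud_up phi r s g l b (Suc i) *s (U ^^ i) v"
  using DU_eigen[OF H_U_pow_eigen[OF assms(1)] UD_U_pow[OF assms]] by simp

lemma UD_D_pow:
  assumes "H v = l *s v" and "U (D v) = b *s v"
  shows "\<exists>c. U (D ((D ^^ j) v)) = c *s (D ^^ j) v"
proof (induction j)
  case (Suc j)
  then obtain c where "U (D ((D ^^ j) v)) = c *s (D ^^ j) v" by blast
  then have "D (U ((D ^^ Suc j) v)) = c *s (D ^^ Suc j) v" by simp
  from UD_eigen[OF H_D_pow_eigen[OF assms(1)] this] show ?case by auto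
qed (use assms in auto)

lemma D_pow_U_pow:
  assumes "H v = l *s v" and "U (D v) = b *s v"
  shows "(D ^^ k) ((U ^^ (k + n)) v) = (\<Prod>t<k. ud_up phi r s g l b (n + t + 1)) *s (U ^^ n) v"
proof (induction k)
  case (Suc k)
  have "(D ^^ Suc k) ((U ^^ (Suc k + n)) v) = (D ^^ k) (D ((U ^^ Suc (k + n)) v))"
    by (simp add: funpow_Suc_right del: funpow.simps)
  also have "\<dots> = ud_up phi r s g l b (Suc (k + n)) *s (D ^^ k) ((U ^^ (k + n)) v)"
    by (simp only: D_U_pow[OF assms] funpow_D_scale)
  finally show ?case using Suc.IH by (simp add: ac_simps)
qed simp

lemma simple_stable_span:
  assumes simple: "gdu_simple scale U D H"
    and "U ` S \<subseteq> span S" and "D ` S \<subseteq> span S" and "H ` S \<subseteq> span S"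
  shows "span S = {0} \<or> span S = UNIV"
proof -
  have "U ` span S \<subseteq> span S" "D ` span S \<subseteq> span S" "H ` span S \<subseteq> span S"
    using hom_span_into[OF hom_U assms(2)] hom_span_into[OF hom_D assms(3)]
      hom_span_into[OF hom_H assms(4)] by blast+
  then show ?thesis using simple unfolding gdu_simple_def by blast
qed

lemma weight_strings_span:
  assumes simple: "gdu_simple scale U D H"
    and v: "v \<noteq> 0" "H v = l *s v" "U (D v) = b *s v"
  shows "span (range (\<lambda>i. (U ^^ i) v) \<union> range (\<lambda>j. (D ^^ j) v)) = UNIV"
proof -
  let ?G = "range (\<lambda>i. (U ^^ i) v) \<union> range (\<lambda>j. (D ^^ j) v)"
  have ups: "a *s (U ^^ i) v \<in> span ?G" and downs: "a *s (D ^^ j) v \<in> span ?G" for a i j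
    by (intro span_scale span_base; simp)+
  have ups1: "(U ^^ i) v \<in> span ?G" and downs1: "(D ^^ j) v \<in> span ?G" for i j
    using ups[of 1] downs[of 1] by simp_all
  have U_G: "U x \<in> span ?G" if "x \<in> ?G" for x
  proof -
    have "U ((D ^^ j) v) \<in> span ?G" for j
    proof (cases j)
      case 0
      then show ?thesis using ups1[of 1] by simp
    next
      case (Suc i)
      then show ?thesis using UD_D_pow[OF v(2,3), of i] downs by auto
    qed
    moreover have "U ((U ^^ i) v) \<in> span ?G" for i using ups1[of "Suc i"] by simp
    ultimately show ?thesis using that by blast
  qed
  have D_G: "D x \<in> span ?G" if "x \<in> ?G" for x
  proof -
    have "D ((U ^^ i) v) \<in> span ?G" for i
    proof (cases i)
      case 0
      then show ?thesis using downs1[of 1] by simp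
    next
      case (Suc j)
      then show ?thesis using D_U_pow[OF v(2,3), of j] ups by simp
    qed
    moreover have "D ((D ^^ j) v) \<in> span ?G" for j using downs1[of "Suc j"] by simp
    ultimately show ?thesis using that by blast
  qed
  have H_G: "H x \<in> span ?G" if "x \<in> ?G" for x
    using that by (auto simp: H_U_pow_eigen[OF v(2)] H_D_pow_eigen[OF v(2)] ups downs)
  have "v \<in> span ?G" using ups1[of 0] by simp
  then show ?thesis
    using simple_stable_span[OF simple image_subsetI image_subsetI image_subsetI, OF U_G D_G H_G] v(1)
    by auto
qed

(* If D^m acts as a nonzero scalar c, then D^m U^(m+n) v is a multiple of U^n v and
   D^(m+n) v = c D^n v, so the vectors U^i v, D^j v with i, j < m span. *)
lemma fin_dim_D_pow_invertible:
  assumes simple: "gdu_simple scale U D H"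
    and v: "v \<noteq> 0" "H v = l *s v" "U (D v) = b *s v"
    and m: "m \<ge> 1" and Dm: "\<forall>x. (D ^^ m) x = c *s x" and c: "c \<noteq> 0"
  shows "fin_dim scale"
proof -
  let ?B = "(\<lambda>i. (U ^^ i) v) ` {..<m} \<union> (\<lambda>j. (D ^^ j) v) ` {..<m}"
  have downs: "(D ^^ j) v \<in> span ?B" for j
  proof (induction j rule: less_induct)
    case (less j)
    show ?case
    proof (cases "j < m")
      case False
      then have "(D ^^ j) v = (D ^^ m) ((D ^^ (j - m)) v)"
        by (metis funpow_add le_add_diff_inverse not_less o_apply)
      also have "\<dots> = c *s (D ^^ (j - m)) v" using Dm by simp
      finally show ?thesis using less[of "j - m"] m False by (simp add: span_scale)
    qed (auto intro: span_base)
  qed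
  have ups: "(U ^^ i) v \<in> span ?B" for i
  proof (induction i rule: less_induct)
    case (less i)
    show ?case
    proof (cases "i < m")
      case False
      define n where "n = i - m"
      let ?p = "\<Prod>t<m. ud_up phi r s g l b (n + t + 1)"
      have i: "i = m + n" using False n_def by simp
      have "c *s (U ^^ i) v = ?p *s (U ^^ n) v"
        using Dm D_pow_U_pow[OF v(2,3), of m n] i by simp
      then have "(U ^^ i) v = (?p / c) *s (U ^^ n) v"
        using c by (metis scale_scale divide_inverse_commute left_inverse mult.commute scale_one)
      then show ?thesis using less[of n] i m by (simp add: span_scale del: scale_scale)
    qed (auto intro: span_base)
  qed
  have "UNIV = span (range (\<lambda>i. (U ^^ i) v) \<union> range (\<lambda>j. (D ^^ j) v))"
    using weight_strings_span[OF simple v] by simp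
  also have "\<dots> \<subseteq> span ?B" using downs ups by (intro span_minimal) auto
  finally show ?thesis unfolding fin_dim_def by (intro exI[of _ ?B]) auto
qed

(* If D acts nilpotently on an H-eigenvector, the last nonzero vector of its D-string is a
   lowest weight vector. *)
lemma lowest_weight_vector:
  assumes "v \<noteq> 0" and "H v = l *s v" and "(D ^^ m) v = 0"
  shows "\<exists>w \<mu>. w \<noteq> 0 \<and> H w = \<mu> *s w \<and> D w = 0"
  using assms
proof (induction m arbitrary: v l)
  case (Suc m)
  show ?case
  proof (cases "D v = 0")
    case False
    have "(D ^^ m) (D v) = 0" using Suc.prems(3) by (simp add: funpow_Suc_right del: funpow.simps)
    then show ?thesis using Suc.IH[OF False H_D_eigen[OF Suc.prems(2)]] by blast
  qed (use Suc.prems in blast)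
qed simp

(* If D^m = 0, the module is finite-dimensional: the U-orbit of a lowest weight vector w
   spans it, and D U^k w = 0 for some k \<ge> 1 makes the orbit from k on span a submodule. *)
lemma fin_dim_D_pow_zero:
  assumes simple: "gdu_simple scale U D H"
    and w: "w \<noteq> 0" "H w = \<mu> *s w" "D w = 0"
    and Dm: "\<forall>x. (D ^^ m) x = 0"
  shows "fin_dim scale"
proof -
  define f where "f i = (U ^^ i) w" for i
  define d where "d = ud_up phi r s g \<mu> 0"
  have UDw: "U (D w) = 0 *s w" using w(3) by simp
  have Uf: "U (f i) = f (Suc i)" for i by (simp add: f_def)
  have Hf: "H (f i) = eig_up r g \<mu> i *s f i" for i
    unfolding f_def by (rule H_U_pow_eigen[OF w(2)])
  have Df: "D (f (Suc j)) = d (Suc j) *s f j" for j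
    unfolding f_def d_def by (rule D_U_pow[OF w(2) UDw])
  have "(\<Prod>t<m. d (t + 1)) *s w = 0"
    using D_pow_U_pow[OF w(2) UDw, of m 0] Dm unfolding d_def by simp
  then obtain k where k: "0 < k" "d k = 0" using w(1) by auto
  have orbit: "a *s f i \<in> span (range f)" for a i by (intro span_scale span_base) simp
  have D_orbit: "D (f i) \<in> span (range f)" for i
    using Df orbit w(3) f_def by (cases i) (auto simp: span_zero)
  have "span (range f) = {0} \<or> span (range f) = UNIV"
    using Uf Hf orbit[of 1] orbit D_orbit by (intro simple_stable_span[OF simple]) auto
  moreover have "w \<in> span (range f)" using orbit[of 1 0] by (simp add: f_def)
  ultimately have spans: "span (range f) = UNIV" using w(1) by blast
  show ?thesis
  proof (cases "\<exists>N. f N \<in> span (f ` {..<N})")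
    case True
    then show ?thesis
      using orbit_dependent_finite_span[OF hom_U] spans unfolding f_def fin_dim_def by blast
  next
    case False
    let ?tail = "f ` {k..}"
    have tail: "a *s f i \<in> span ?tail" if "i \<ge> k" for a i
      using that by (intro span_scale span_base) simp
    have U_tail: "U ` ?tail \<subseteq> span ?tail" and H_tail: "H ` ?tail \<subseteq> span ?tail"
      using Uf Hf tail[of _ 1] tail by auto
    have D_tail: "D ` ?tail \<subseteq> span ?tail"
    proof (rule image_subsetI)
      fix x assume "x \<in> ?tail"
      then obtain j where jk: "j \<ge> k" and x: "x = f j" by blast
      show "D x \<in> span ?tail"
      proof (cases "j = k")
        case True
        obtain i where "k = Suc i" using k(1) by (cases k) auto
        then show ?thesis using Df[of i] k(2) True x by (simp add: span_zero)
      next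
        case False
        then obtain i where "j = Suc i" "i \<ge> k" using jk k(1) by (cases j) auto
        then show ?thesis using Df tail x by simp
      qed
    qed
    have "span ?tail = {0} \<or> span ?tail = UNIV"
      by (rule simple_stable_span[OF simple U_tail D_tail H_tail])
    moreover have "f k \<noteq> 0" using False by (metis span_zero)
    moreover have "f 0 \<notin> span ?tail"
      using triangular_head_not_in_tail_span[of f k] False k by blast
    ultimately show ?thesis by (auto intro: span_base)
  qed
qed

lemma fin_dim_D_pow_scalar:
  assumes simple: "gdu_simple scale U D H"
    and v: "v \<noteq> 0" "H v = l *s v" "U (D v) = b *s v"
    and m: "m \<ge> 1" and Dm: "\<forall>x. (D ^^ m) x = c *s x"
  shows "fin_dim scale"
proof (cases "c = 0")
  case True
  then obtain w \<mu> where "w \<noteq> 0" "H w = \<mu> *s w" "D w = 0"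
    using lowest_weight_vector[OF v(1,2), of m] Dm by auto
  then show ?thesis using fin_dim_D_pow_zero[OF simple] Dm True by simp
qed (use fin_dim_D_pow_invertible[OF simple v m Dm] in simp)

lemma poly_op_smult: "a \<noteq> 0 \<Longrightarrow> poly_op scale (smult a p) F x = a *s poly_op scale p F x"
  unfolding poly_op_def by (simp add: degree_smult_eq scale_sum_right)

lemma swap_up_down: "du_module scale (smult (-1/s) phi) (1/r) (1/s) (-g/r) D U H"
proof unfold_locales
  fix x
  have "r *s (H (D x) - (1/r) *s D (H x)) = r *s ((-g/r) *s D x)"
    using rel_DH[of x] r_nz by (simp add: scale_right_diff_distrib algebra_simps)
  then show "H (D x) - (1/r) *s D (H x) = (-g/r) *s D x" by (rule scale_left_imp_eq[OF r_nz])
  have "r *s (U (H x) - (1/r) *s H (U x)) = r *s ((-g/r) *s U x)"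
    using rel_HU[of x] r_nz by (simp add: scale_right_diff_distrib algebra_simps)
  then show "U (H x) - (1/r) *s H (U x) = (-g/r) *s U x" by (rule scale_left_imp_eq[OF r_nz])
  have "s *s (U (D x) - (1/s) *s D (U x)) = s *s ((-1/s) *s poly_op scale phi H x)"
    using rel_DU[of x] s_nz by (simp add: scale_right_diff_distrib algebra_simps)
  then have "U (D x) - (1/s) *s D (U x) = (-1/s) *s poly_op scale phi H x"
    by (rule scale_left_imp_eq[OF s_nz])
  then show "U (D x) - (1/s) *s D (U x) = poly_op scale (smult (-1/s) phi) H x"
    using poly_op_smult[of "-1/s" phi H x] s_nz by simp
qed (use U_add D_add H_add r_nz s_nz in auto)

end

lemma du_module_if_gdu_module:
  assumes "r * s \<noteq> 0" and "gdu_module phi r s g scale U D H"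
  shows "du_module scale phi r s g U D H"
  using assms unfolding gdu_module_def du_module_def du_module_axioms_def linear_iff_module_hom
  by auto

theorem mainTheorem3:
  fixes phi :: "complex poly" and r s \<gamma> :: complex
    and scale :: "complex \<Rightarrow> 'v::ab_group_add \<Rightarrow> 'v"
    and U D H :: "'v \<Rightarrow> 'v"
  assumes "r * s \<noteq> 0"
    and "gdu_module phi r s \<gamma> scale U D H"
    and "gdu_simple scale U D H"
    and "\<exists>m\<ge>1. (\<exists>c. \<forall>v. (D ^^ m) v = scale c v) \<or> (\<exists>c. \<forall>v. (U ^^ m) v = scale c v)"
    and "\<exists>v. weight_vector scale U D H v"
  shows "fin_dim scale"
proof -
  interpret M: du_module scale phi r s \<gamma> U D H
    using assms(1,2) by (rule du_module_if_gdu_module)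
  interpret M': du_module scale "smult (-1/s) phi" "1/r" "1/s" "-\<gamma>/r" D U H
    by (rule M.swap_up_down)
  obtain v l b where v: "v \<noteq> 0" "H v = scale l v" "U (D v) = scale b v"
    using assms(5) unfolding weight_vector_def by blast
  obtain m c where m: "m \<ge> 1"
    and "(\<forall>x. (D ^^ m) x = scale c x) \<or> (\<forall>x. (U ^^ m) x = scale c x)"
    using assms(4) by blast
  then consider "\<forall>x. (D ^^ m) x = scale c x" | "\<forall>x. (U ^^ m) x = scale c x" by blast
  then show ?thesis
  proof cases
    case 1
    then show ?thesis using M.fin_dim_D_pow_scalar[OF assms(3) v m] by blast
  next
    case 2
    have "gdu_simple scale D U H" using assms(3) unfolding gdu_simple_def by blast
    moreover have "D (U v) = scale (s * b + poly phi l) v" by (rule M.DU_eigen[OF v(2,3)])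
    ultimately show ?thesis using M'.fin_dim_D_pow_scalar[OF _ v(1,2) _ m 2] by blast
  qed
qed

end
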